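(* Let $d, N, r$ be positive integers, let $\|\cdot\|$ be any norm on $\mathbb{R}^d$ with unit ball $B = \{v \in \mathbb{R}^d : \|v\| \le 1\}$, and let $V_1, \dots, V_N$ be finite subsets of $B$ with $|V_i| \ge r$ for all $i \in [N]$. Then there is an $r$-selection $\chi$ of $(V_i)_{i\in[N]}$ with \[ \max_{n \in [N]} \max_{\ell \in [r]} \Big\| \sum_{i \in [n]} \Big( \chi(i,\ell) - \frac{1}{|V_i|} \sum_{v \in V_i} v \Big) \Big\| \le 5d. \]
   Context: $[n] = \{1, \dots, n\}$. An $r$-selection of $(V_i)_{i \in [N]}$ is a mapping $\chi : [N] \times [r] \to \mathbb{R}^d$ such that for every $i \in [N]$ the set $\chi(i,[r]) = \{\chi(i,\ell) : \ell \in [r]\}$ is an $r$-element subset of $V_i$ (so $\chi(i,1),\dots,\chi(i,r)$ are $r$ distinct elements of $V_i$). *)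

theory Defs
  imports "HOL-Analysis.Analysis"
begin

definition is_norm :: "('a::real_vector \<Rightarrow> real) \<Rightarrow> bool" where
  "is_norm nrm \<longleftrightarrow>
     (\<forall>x. 0 \<le> nrm x) \<and> (\<forall>x. nrm x = 0 \<longleftrightarrow> x = 0) \<and>
     (\<forall>c x. nrm (c *\<^sub>R x) = \<bar>c\<bar> * nrm x) \<and>
     (\<forall>x y. nrm (x + y) \<le> nrm x + nrm y)"

definition r_selection ::
    "nat \<Rightarrow> nat \<Rightarrow> (nat \<Rightarrow> 'a set) \<Rightarrow> (nat \<Rightarrow> nat \<Rightarrow> 'a) \<Rightarrow> bool" where
  "r_selection N r V chi \<longleftrightarrow>
     (\<forall>i\<in>{1..N}. inj_on (chi i) {1..r} \<and> chi i ` {1..r} \<subseteq> V i)"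

end

theory Submission
  imports Defs
begin

(*
  Give every pair (i, v) with v in V i the fractional weight k i / card (V i) and round these
  weights to 0/1 block by block, keeping every block sum k i. While the fractional coordinates in
  blocks 1..m outnumber the blocks they meet by more than d = DIM, the conditions block sums
  fixed and vector sum over blocks 1..m fixed leave a nonzero direction supported on them; moving
  along it makes one more coordinate integral. After that, every 0/1 rounding with the same block
  sums moves the prefix sum by at most 2 d, since a block with f fractional coordinates contributes
  at most 2 (f - 1) and all vectors lie in the unit ball. Integral coordinates are never moved
  again, so later stages keep the bounds of earlier prefixes. This yields subsets of prescribed
  sizes whose prefix sums are within 2 d of the proportional targets.

  An r-selection is built by halving: split each r-set into halves of sizes floor (r/2) and
  ceil (r/2) with error 2 d, select recursively in both halves and concatenate. A half of size c
  costs an extra 2 d / c, the passage from V i to r-subsets costs 2 d / r, and the accumulated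
  error 2 d (halving_bound r + 1 / r) stays below 5 d.
*)

lemma is_norm_scaleR: "is_norm nrm \<Longrightarrow> nrm (c *\<^sub>R x) = \<bar>c\<bar> * nrm x"
  unfolding is_norm_def by blast

lemma is_norm_zero: "is_norm nrm \<Longrightarrow> nrm 0 = 0"
  unfolding is_norm_def by blast

lemma is_norm_minus: "is_norm nrm \<Longrightarrow> nrm (- x) = nrm x"
  using is_norm_scaleR[of nrm "-1" x] by simp

lemma is_norm_triangle: "is_norm nrm \<Longrightarrow> nrm (x + y) \<le> nrm x + nrm y"
  unfolding is_norm_def by blast

lemma is_norm_sum_le:
  assumes "is_norm nrm"
  shows "nrm (\<Sum>j\<in>S. f j) \<le> (\<Sum>j\<in>S. nrm (f j))"
proof (induction S rule: infinite_finite_induct)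
  case (insert x F)
  then show ?case
    using is_norm_triangle[OF assms, of "f x" "sum f F"] by simp
qed (simp_all add: is_norm_zero[OF assms])

lemma is_norm_add_scaleR_le:
  "is_norm nrm \<Longrightarrow> nrm (x + c *\<^sub>R y) \<le> nrm x + \<bar>c\<bar> * nrm y"
  using is_norm_triangle[of nrm x "c *\<^sub>R y"] is_norm_scaleR[of nrm c y] by simp

lemma exists_nontrivial_vanishing_combination:
  fixes w :: "'j \<Rightarrow> 'a::euclidean_space"
  assumes "finite Q" "card Q > DIM('a)"
  shows "\<exists>u. (\<exists>j\<in>Q. u j \<noteq> 0) \<and> (\<Sum>j\<in>Q. u j *\<^sub>R w j) = 0"
proof (cases "inj_on w Q")
  case True
  then have "dependent (w ` Q)"
    using assms by (intro dependent_biggerset) (simp add: card_image)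
  then obtain u where u: "\<exists>v\<in>w ` Q. u v \<noteq> 0" "(\<Sum>v\<in>w ` Q. u v *\<^sub>R v) = 0"
    using dependent_finite[of "w ` Q"] assms(1) by auto
  then show ?thesis
    using True by (intro exI[of _ "u \<circ> w"]) (auto simp: sum.reindex)
next
  case False
  then obtain j k where jk: "j \<in> Q" "k \<in> Q" "j \<noteq> k" "w j = w k"
    unfolding inj_on_def by blast
  let ?u = "\<lambda>t. (if t = j then 1 else 0) - (if t = k then 1 else 0 :: real)"
  have "(\<Sum>t\<in>Q. ?u t *\<^sub>R w t) = w j - w k"
    using jk assms(1) by (simp add: scaleR_diff_left sum_subtractf if_distrib[of "\<lambda>c. c *\<^sub>R _"] cong: if_cong)
  then show ?thesis
    using jk by (intro exI[of _ ?u]) auto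
qed

definition transfer :: "'j set \<Rightarrow> ('j \<Rightarrow> 'j) \<Rightarrow> ('j \<Rightarrow> real) \<Rightarrow> 'j \<Rightarrow> real" where
  "transfer Q r u j = (\<Sum>q\<in>Q. u q * ((if j = q then 1 else 0) - (if j = r q then 1 else 0)))"

lemma transfer_outside: "j \<notin> Q \<Longrightarrow> j \<notin> r ` Q \<Longrightarrow> transfer Q r u j = 0"
  unfolding transfer_def by (intro sum.neutral) auto

lemma transfer_source: "finite Q \<Longrightarrow> q \<in> Q \<Longrightarrow> q \<notin> r ` Q \<Longrightarrow> transfer Q r u q = u q"
  unfolding transfer_def by (subst sum.cong[OF refl, where h = "\<lambda>q'. if q' = q then u q' else 0"]) auto

lemma sum_transfer_scaleR:
  fixes g :: "'j \<Rightarrow> 'a::real_vector"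
  assumes "finite F" "Q \<subseteq> F" "r ` Q \<subseteq> F"
  shows "(\<Sum>j\<in>F. transfer Q r u j *\<^sub>R g j) = (\<Sum>q\<in>Q. u q *\<^sub>R (g q - g (r q)))"
proof -
  have "(\<Sum>j\<in>F. transfer Q r u j *\<^sub>R g j)
      = (\<Sum>j\<in>F. \<Sum>q\<in>Q. u q *\<^sub>R ((if j = q then g j else 0) - (if j = r q then g j else 0)))"
    unfolding transfer_def scaleR_sum_left by (intro sum.cong refl) auto
  also have "\<dots> = (\<Sum>q\<in>Q. u q *\<^sub>R ((\<Sum>j\<in>F. if j = q then g j else 0) - (\<Sum>j\<in>F. if j = r q then g j else 0)))"
    by (subst sum.swap) (simp add: sum_subtractf scaleR_diff_right scaleR_sum_right)
  also have "\<dots> = (\<Sum>q\<in>Q. u q *\<^sub>R (g q - g (r q)))"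
    using assms by (intro sum.cong) (auto simp: sum.delta)
  finally show ?thesis .
qed

lemma sum_transfer_block:
  assumes "finite F" "Q \<subseteq> F" "r ` Q \<subseteq> F" "\<And>q. q \<in> Q \<Longrightarrow> fst (r q) = fst q"
  shows "sum (transfer Q r u) {j\<in>F. fst j = i} = 0"
proof -
  have "sum (transfer Q r u) {j\<in>F. fst j = i} = (\<Sum>j\<in>F. transfer Q r u j *\<^sub>R (if fst j = i then 1 else 0 :: real))"
    using assms(1) by (simp add: sum.inter_filter if_distrib[of "\<lambda>x. _ * x"] cong: if_cong)
  also have "\<dots> = (\<Sum>q\<in>Q. u q *\<^sub>R ((if fst q = i then 1 else 0) - (if fst (r q) = i then 1 else 0)))"
    using assms(1-3) by (rule sum_transfer_scaleR)
  also have "\<dots> = 0"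
    using assms(4) by (intro sum.neutral) auto
  finally show ?thesis .
qed

lemma exists_block_balanced_dependence:
  fixes F :: "('i \<times> 'a::euclidean_space) set"
  assumes fin: "finite F" and big: "card F > card (fst ` F) + DIM('a)"
  shows "\<exists>c. (\<forall>j. j \<notin> F \<longrightarrow> c j = 0) \<and> (\<forall>i. sum c {j\<in>F. fst j = i} = 0)
    \<and> (\<Sum>j\<in>F. c j *\<^sub>R snd j) = 0 \<and> (\<exists>j\<in>F. c j \<noteq> 0)"
proof -
  define rep where "rep i = (SOME j. j \<in> F \<and> fst j = i)" for i
  have rep: "rep i \<in> F \<and> fst (rep i) = i" if "i \<in> fst ` F" for i
  proof -
    have "\<exists>j. j \<in> F \<and> fst j = i"
      using that by auto
    then show ?thesis
      unfolding rep_def by (rule someI_ex)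
  qed
  \<comment> \<open>A dependence among the differences to the block representatives, moved back onto F by
    transfer, keeps every block sum at zero.\<close>
  define Q where "Q = F - rep ` fst ` F"
  define r where "r q = rep (fst q)" for q :: "'i \<times> 'a"
  have "Q \<subseteq> F" "r ` Q \<subseteq> F" "r ` Q \<inter> Q = {}"
    unfolding Q_def r_def using rep by blast+
  have "fst (r q) = fst q" if "q \<in> Q" for q
    using \<open>Q \<subseteq> F\<close> rep that unfolding r_def by blast
  have "card (rep ` fst ` F) \<le> card (fst ` F)"
    using fin by (intro card_image_le) auto
  then have "card Q > DIM('a)"
    unfolding Q_def using big fin rep by (simp add: card_Diff_subset finite_subset image_subset_iff)
  then obtain u where u: "\<exists>q\<in>Q. u q \<noteq> 0" "(\<Sum>q\<in>Q. u q *\<^sub>R (snd q - snd (r q))) = 0"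
    using exists_nontrivial_vanishing_combination[of Q "\<lambda>q. snd q - snd (r q)"] fin \<open>Q \<subseteq> F\<close>
    by (auto intro: rev_finite_subset)
  show ?thesis
  proof (intro exI[of _ "transfer Q r u"] conjI allI impI)
    show "transfer Q r u j = 0" if "j \<notin> F" for j
      using that \<open>Q \<subseteq> F\<close> \<open>r ` Q \<subseteq> F\<close> by (intro transfer_outside) auto
    show "sum (transfer Q r u) {j\<in>F. fst j = i} = 0" for i
      using fin \<open>Q \<subseteq> F\<close> \<open>r ` Q \<subseteq> F\<close> \<open>\<And>q. q \<in> Q \<Longrightarrow> fst (r q) = fst q\<close> by (rule sum_transfer_block)
    show "(\<Sum>j\<in>F. transfer Q r u j *\<^sub>R snd j) = 0"
      using fin \<open>Q \<subseteq> F\<close> \<open>r ` Q \<subseteq> F\<close> u(2) by (simp add: sum_transfer_scaleR)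
    show "\<exists>j\<in>F. transfer Q r u j \<noteq> 0"
      using u(1) \<open>Q \<subseteq> F\<close> \<open>r ` Q \<inter> Q = {}\<close> fin transfer_source[of Q _ r u]
      by (metis disjoint_iff rev_finite_subset subsetD)
  qed
qed

definition fractional :: "('j \<Rightarrow> real) \<Rightarrow> 'j set \<Rightarrow> 'j set" where
  "fractional z R = {j\<in>R. 0 < z j \<and> z j < 1}"

definition refines :: "('i \<times> 'b) set \<Rightarrow> ('i \<times> 'b \<Rightarrow> real) \<Rightarrow> ('i \<times> 'b \<Rightarrow> real) \<Rightarrow> bool" where
  "refines J y z \<longleftrightarrow>
     (\<forall>i. sum y {j\<in>J. fst j = i} = sum z {j\<in>J. fst j = i}) \<and> (\<forall>j\<in>J. z j \<in> {0, 1} \<longrightarrow> y j = z j)"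

lemma refines_refl: "refines J z z"
  unfolding refines_def by simp

lemma refines_trans: "refines J y z \<Longrightarrow> refines J z x \<Longrightarrow> refines J y x"
  unfolding refines_def by auto

lemma exists_step_to_boundary:
  fixes z c :: "'j \<Rightarrow> real"
  assumes "finite S" "S \<noteq> {}" and S: "\<And>j. j \<in> S \<Longrightarrow> 0 < z j \<and> z j < 1 \<and> c j \<noteq> 0"
  shows "\<exists>t. (\<forall>j\<in>S. 0 \<le> z j + t * c j \<and> z j + t * c j \<le> 1)
    \<and> (\<exists>j\<in>S. z j + t * c j \<in> {0, 1})"
proof -
  \<comment> \<open>Coordinate j reaches the boundary of [0,1] at time hit j.\<close>
  define hit where "hit j = (if c j > 0 then (1 - z j) / c j else z j / (- c j))" for j
  define t where "t = Min (hit ` S)"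
  have t_le: "t \<le> hit j" if "j \<in> S" for j
    unfolding t_def using assms(1) that by simp
  have "t \<in> hit ` S"
    unfolding t_def using assms(1,2) by simp
  then obtain j0 where j0: "j0 \<in> S" "hit j0 = t"
    by blast
  have "t \<ge> 0"
    using S[OF j0(1)] j0(2) unfolding hit_def by (auto simp: divide_le_0_iff split: if_splits)
  have "0 \<le> z j + t * c j \<and> z j + t * c j \<le> 1" if "j \<in> S" for j
  proof (cases "c j > 0")
    case True
    then have "t * c j \<le> 1 - z j"
      using t_le[OF that] unfolding hit_def by (simp add: pos_le_divide_eq)
    then show ?thesis
      using True S[OF that] \<open>t \<ge> 0\<close> by simp
  next
    case False
    then have "c j < 0"
      using S[OF that] by linarith
    moreover have "t \<le> z j / (- c j)"
      using t_le[OF that] False unfolding hit_def by simp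
    ultimately have "t * (- c j) \<le> z j"
      using pos_le_divide_eq[of "- c j" t "z j"] by simp
    then show ?thesis
      using \<open>c j < 0\<close> S[OF that] mult_nonneg_nonpos[OF \<open>t \<ge> 0\<close>, of "c j"] by simp
  qed
  moreover have "z j0 + t * c j0 \<in> {0, 1}"
    using S[OF j0(1)] j0(2) unfolding hit_def by (auto split: if_splits)
  ultimately show ?thesis
    using j0(1) by blast
qed

lemma exists_boundary_move:
  fixes F :: "('i \<times> 'a::euclidean_space) set"
  assumes "finite F" and F: "\<forall>j\<in>F. 0 < z j \<and> z j < 1" and "card F > card (fst ` F) + DIM('a)"
  shows "\<exists>c. (\<forall>j. j \<notin> F \<longrightarrow> c j = 0) \<and> (\<forall>i. sum c {j\<in>F. fst j = i} = 0)
    \<and> (\<Sum>j\<in>F. c j *\<^sub>R snd j) = 0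
    \<and> (\<forall>j\<in>F. 0 \<le> z j + c j \<and> z j + c j \<le> 1) \<and> (\<exists>j\<in>F. z j + c j \<in> {0, 1})"
proof -
  obtain d where d_out: "\<And>j. j \<notin> F \<Longrightarrow> d j = 0" and d_block: "\<forall>i. sum d {j\<in>F. fst j = i} = 0"
    and d_vector: "(\<Sum>j\<in>F. d j *\<^sub>R snd j) = 0" and "\<exists>j\<in>F. d j \<noteq> 0"
    using exists_block_balanced_dependence[OF assms(1,3)] by blast
  define S where "S = {j\<in>F. d j \<noteq> 0}"
  have "finite S" "S \<noteq> {}" "\<And>j. j \<in> S \<Longrightarrow> 0 < z j \<and> z j < 1 \<and> d j \<noteq> 0"
    unfolding S_def using \<open>finite F\<close> \<open>\<exists>j\<in>F. d j \<noteq> 0\<close> F by auto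
  then obtain t where t_box: "\<forall>j\<in>S. 0 \<le> z j + t * d j \<and> z j + t * d j \<le> 1"
    and t_hit: "\<exists>j\<in>S. z j + t * d j \<in> {0, 1}"
    by (blast dest: exists_step_to_boundary)
  have "0 \<le> z j + t * d j \<and> z j + t * d j \<le> 1" if "j \<in> F" for j
  proof (cases "j \<in> S")
    case False
    then have "d j = 0"
      using that unfolding S_def by blast
    then show ?thesis
      using that F by auto
  qed (use t_box in blast)
  moreover have "t *\<^sub>R (\<Sum>j\<in>F. d j *\<^sub>R snd j) = 0"
    using d_vector by simp
  ultimately show ?thesis
    using d_out d_block t_hit unfolding S_def
    by (intro exI[of _ "\<lambda>j. t * d j"]) (auto simp: sum_distrib_left[symmetric] scaleR_sum_right)
qed

lemma refines_add_balanced: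
  assumes "finite J" "F \<subseteq> J" "\<And>j. j \<notin> F \<Longrightarrow> c j = 0" "\<forall>i. sum c {j\<in>F. fst j = i} = 0"
    and "\<forall>j\<in>F. z j \<notin> {0, 1}"
  shows "refines J (\<lambda>j. z j + c j) z"
  unfolding refines_def
proof (intro conjI allI ballI impI)
  fix i
  have "sum c {j\<in>J. fst j = i} = sum c {j\<in>F. fst j = i}"
    using assms(1-3) by (intro sum.mono_neutral_right) auto
  then show "(\<Sum>j\<in>{j\<in>J. fst j = i}. z j + c j) = sum z {j\<in>J. fst j = i}"
    using assms(4) by (simp add: sum.distrib)
next
  fix j assume "z j \<in> {0, 1}"
  then have "j \<notin> F"
    using assms(5) by blast
  then show "z j + c j = z j"
    using assms(3) by simp
qed

lemma fractional_add_psubset: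
  assumes "\<And>j. j \<notin> fractional z R \<Longrightarrow> c j = 0" and "\<exists>j\<in>fractional z R. z j + c j \<in> {0, 1}"
  shows "fractional (\<lambda>j. z j + c j) R \<subset> fractional z R"
proof
  show "fractional (\<lambda>j. z j + c j) R \<subseteq> fractional z R"
  proof
    fix j assume "j \<in> fractional (\<lambda>j. z j + c j) R"
    then show "j \<in> fractional z R"
      using assms(1)[of j] by (cases "j \<in> fractional z R") (auto simp: fractional_def)
  qed
  obtain j0 where "j0 \<in> fractional z R" "z j0 + c j0 \<in> {0, 1}"
    using assms(2) by blast
  moreover from this(2) have "j0 \<notin> fractional (\<lambda>j. z j + c j) R"
    unfolding fractional_def by auto
  ultimately show "fractional (\<lambda>j. z j + c j) R \<noteq> fractional z R"
    by blast
qed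

lemma reduce_fractional_support_step:
  fixes J R :: "('i \<times> 'a::euclidean_space) set"
  assumes "finite J" "R \<subseteq> J" and box: "\<forall>j\<in>J. 0 \<le> z j \<and> z j \<le> 1"
    and big: "card (fractional z R) > card (fst ` fractional z R) + DIM('a)"
  shows "\<exists>z'. (\<forall>j\<in>J. 0 \<le> z' j \<and> z' j \<le> 1) \<and> refines J z' z
    \<and> (\<forall>j. j \<notin> fractional z R \<longrightarrow> z' j = z j)
    \<and> (\<Sum>j\<in>R. z' j *\<^sub>R snd j) = (\<Sum>j\<in>R. z j *\<^sub>R snd j)
    \<and> fractional z' R \<subset> fractional z R"
proof -
  define F where "F = fractional z R"
  have "F \<subseteq> R" "finite R"
    unfolding F_def fractional_def using assms(1,2) by (auto intro: rev_finite_subset)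
  then have "finite F"
    by (rule rev_finite_subset[rotated])
  moreover have F: "\<forall>j\<in>F. 0 < z j \<and> z j < 1"
    unfolding F_def fractional_def by auto
  ultimately obtain c where c_out: "\<And>j. j \<notin> F \<Longrightarrow> c j = 0"
    and c_block: "\<forall>i. sum c {j\<in>F. fst j = i} = 0" and c_vector: "(\<Sum>j\<in>F. c j *\<^sub>R snd j) = 0"
    and c_box: "\<forall>j\<in>F. 0 \<le> z j + c j \<and> z j + c j \<le> 1" and c_hit: "\<exists>j\<in>F. z j + c j \<in> {0, 1}"
    using exists_boundary_move[of F z] big unfolding F_def by blast
  define z' where "z' j = z j + c j" for j
  have unchanged: "z' j = z j" if "j \<notin> F" for j
    using c_out[OF that] unfolding z'_def by simp
  have "\<forall>j\<in>J. 0 \<le> z' j \<and> z' j \<le> 1"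
    using box c_box unchanged unfolding z'_def by (metis add.right_neutral c_out)
  moreover have "refines J z' z"
    unfolding z'_def using assms(1,2) \<open>F \<subseteq> R\<close> c_out c_block F
    by (intro refines_add_balanced) auto
  moreover have "(\<Sum>j\<in>R. c j *\<^sub>R snd j) = (\<Sum>j\<in>F. c j *\<^sub>R snd j)"
    using \<open>finite R\<close> \<open>F \<subseteq> R\<close> c_out by (intro sum.mono_neutral_right) auto
  then have "(\<Sum>j\<in>R. z' j *\<^sub>R snd j) = (\<Sum>j\<in>R. z j *\<^sub>R snd j)"
    using c_vector unfolding z'_def by (simp add: scaleR_add_left sum.distrib)
  moreover have "fractional z' R \<subset> F"
    using c_out c_hit unfolding z'_def F_def by (rule fractional_add_psubset)
  ultimately show ?thesis
    using unchanged unfolding F_def by blast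
qed

lemma reduce_fractional_support:
  fixes J R :: "('i \<times> 'a::euclidean_space) set"
  assumes "finite J" "R \<subseteq> J" and "\<forall>j\<in>J. 0 \<le> z j \<and> z j \<le> 1"
  shows "\<exists>z'. (\<forall>j\<in>J. 0 \<le> z' j \<and> z' j \<le> 1) \<and> refines J z' z
    \<and> (\<forall>j. j \<notin> fractional z R \<longrightarrow> z' j = z j)
    \<and> (\<Sum>j\<in>R. z' j *\<^sub>R snd j) = (\<Sum>j\<in>R. z j *\<^sub>R snd j)
    \<and> card (fractional z' R) \<le> card (fst ` fractional z' R) + DIM('a)"
  using assms(3)
proof (induction "card (fractional z R)" arbitrary: z rule: less_induct)
  case less
  show ?case
  proof (cases "card (fractional z R) \<le> card (fst ` fractional z R) + DIM('a)")
    case True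
    then show ?thesis
      using less.prems refines_refl by blast
  next
    case False
    then have "card (fractional z R) > card (fst ` fractional z R) + DIM('a)"
      by simp
    then obtain z1 where z1_box: "\<forall>j\<in>J. 0 \<le> z1 j \<and> z1 j \<le> 1" and "refines J z1 z"
      and z1_unchanged: "\<forall>j. j \<notin> fractional z R \<longrightarrow> z1 j = z j"
      and z1_vector: "(\<Sum>j\<in>R. z1 j *\<^sub>R snd j) = (\<Sum>j\<in>R. z j *\<^sub>R snd j)"
      and z1_fractional: "fractional z1 R \<subset> fractional z R"
      using reduce_fractional_support_step[OF assms(1,2) less.prems] by blast
    moreover have "finite (fractional z R)"
      using assms(1,2) unfolding fractional_def by (auto intro: rev_finite_subset)
    ultimately obtain z' where "\<forall>j\<in>J. 0 \<le> z' j \<and> z' j \<le> 1" "refines J z' z1"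
      and z'_unchanged: "\<And>j. j \<notin> fractional z1 R \<Longrightarrow> z' j = z1 j"
      and "(\<Sum>j\<in>R. z' j *\<^sub>R snd j) = (\<Sum>j\<in>R. z1 j *\<^sub>R snd j)"
      and "card (fractional z' R) \<le> card (fst ` fractional z' R) + DIM('a)"
      using less.hyps[OF psubset_card_mono z1_box] by blast
    moreover have "z' j = z j" if "j \<notin> fractional z R" for j
      using that z1_fractional z1_unchanged[rule_format, of j] z'_unchanged[of j] by auto
    ultimately show ?thesis
      using \<open>refines J z1 z\<close> refines_trans z1_vector by (intro exI[of _ z']) auto
  qed
qed

lemma sum_abs_rounding_block_le:
  fixes y z :: "'j \<Rightarrow> real"
  assumes "finite B" "B \<noteq> {}" and y: "\<forall>j\<in>B. y j \<in> {0, 1}" and z: "\<forall>j\<in>B. 0 \<le> z j \<and> z j \<le> 1"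
    and "sum y B = sum z B"
  shows "(\<Sum>j\<in>B. \<bar>y j - z j\<bar>) \<le> 2 * (real (card B) - 1)"
proof -
  define Ones where "Ones = {j\<in>B. y j = 1}"
  define Zeros where "Zeros = B - Ones"
  have parts: "B = Ones \<union> Zeros" "Ones \<inter> Zeros = {}" "finite Ones" "finite Zeros"
    using assms(1) unfolding Ones_def Zeros_def by auto
  have y_Z: "y j = 0" if "j \<in> Zeros" for j
    using that y unfolding Zeros_def Ones_def by auto
  have split: "sum f B = sum f Ones + sum f Zeros" for f :: "'j \<Rightarrow> real"
    by (subst parts(1)) (rule sum.union_disjoint[OF parts(3,4,2)])
  have "sum y B = real (card Ones)"
    using y_Z by (simp add: split Ones_def)
  then have balance: "(\<Sum>j\<in>Ones. 1 - z j) = (\<Sum>j\<in>Zeros. z j)"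
    using assms(5) by (simp add: split sum_subtractf)
  have "(\<Sum>j\<in>B. \<bar>y j - z j\<bar>) = (\<Sum>j\<in>Ones. 1 - z j) + (\<Sum>j\<in>Zeros. z j)"
    using z y unfolding split by (intro arg_cong2[where f = "(+)"] sum.cong) (auto simp: Ones_def Zeros_def)
  then have total: "(\<Sum>j\<in>B. \<bar>y j - z j\<bar>) = 2 * (\<Sum>j\<in>Zeros. z j)"
    using balance by simp
  show ?thesis
  proof (cases "Ones = {}")
    case True
    then show ?thesis
      using total balance assms(1,2) by (simp add: Suc_leI card_gt_0_iff)
  next
    case False
    then have "card Zeros < card B"
      using parts by (simp add: card_Un_disjoint card_gt_0_iff)
    then have "real (card Zeros) + 1 \<le> real (card B)"
      by (simp add: nat_less_real_le)
    moreover have "(\<Sum>j\<in>Zeros. z j) \<le> real (card Zeros)"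
      using sum_mono[of Zeros z "\<lambda>_. 1"] z unfolding Zeros_def by auto
    ultimately show ?thesis
      using total by argo
  qed
qed

lemma sum_abs_rounding_le:
  fixes F :: "('i \<times> 'b) set" and y z :: "'i \<times> 'b \<Rightarrow> real"
  assumes "finite F" "\<forall>j\<in>F. y j \<in> {0, 1}" "\<forall>j\<in>F. 0 \<le> z j \<and> z j \<le> 1"
    and blocks: "\<And>i. sum y {j\<in>F. fst j = i} = sum z {j\<in>F. fst j = i}"
  shows "(\<Sum>j\<in>F. \<bar>y j - z j\<bar>) \<le> 2 * (real (card F) - real (card (fst ` F)))"
proof -
  have "(\<Sum>j\<in>F. \<bar>y j - z j\<bar>) = (\<Sum>i\<in>fst ` F. \<Sum>j\<in>{j\<in>F. fst j = i}. \<bar>y j - z j\<bar>)"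
    using assms(1) by (simp add: sum.group)
  also have "\<dots> \<le> (\<Sum>i\<in>fst ` F. 2 * (real (card {j\<in>F. fst j = i}) - 1))"
    using assms by (intro sum_mono sum_abs_rounding_block_le) auto
  also have "\<dots> = 2 * (real (card F) - real (card (fst ` F)))"
    using sum.group[OF assms(1) finite_imageI[OF assms(1)], where g = fst and h = "\<lambda>_. 1 :: real"]
    by (simp add: sum_subtractf sum_distrib_left[symmetric])
  finally show ?thesis .
qed

lemma refines_eq_off_fractional:
  assumes "refines J y z" "R \<subseteq> J" "\<forall>j\<in>J. 0 \<le> z j \<and> z j \<le> 1" "j \<in> R" "j \<notin> fractional z R"
  shows "y j = z j"
proof -
  have "z j \<in> {0, 1}"
    using assms(2-5) unfolding fractional_def by force
  then show ?thesis
    using assms(1,2,4) unfolding refines_def by blast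
qed

lemma refines_fractional_block_sums:
  assumes "finite J" "refines J y z" "R \<subseteq> J" "\<forall>j\<in>J. 0 \<le> z j \<and> z j \<le> 1"
    and R_blocks: "\<And>j j'. j \<in> J \<Longrightarrow> j' \<in> R \<Longrightarrow> fst j = fst j' \<Longrightarrow> j \<in> R"
  shows "sum y {j\<in>fractional z R. fst j = i} = sum z {j\<in>fractional z R. fst j = i}"
proof (cases "i \<in> fst ` fractional z R")
  case True
  define Jb where "Jb = {j\<in>J. fst j = i}"
  define Fb where "Fb = {j\<in>fractional z R. fst j = i}"
  have "Fb \<subseteq> Jb" "finite Jb"
    using assms(1,3) unfolding Fb_def Jb_def fractional_def by auto
  moreover have "Jb - Fb \<subseteq> R - fractional z R"
    using True R_blocks unfolding Jb_def Fb_def fractional_def by blast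
  then have "sum y (Jb - Fb) = sum z (Jb - Fb)"
    using refines_eq_off_fractional[OF assms(2,3,4)] by (intro sum.cong) auto
  moreover have "sum y Jb = sum z Jb"
    using assms(2) unfolding refines_def Jb_def by blast
  ultimately show ?thesis
    unfolding Fb_def[symmetric] by (metis add_left_cancel sum.subset_diff)
next
  case False
  then have "{j\<in>fractional z R. fst j = i} = {}"
    by force
  then show ?thesis
    by (metis sum.empty)
qed

lemma rounding_error_le:
  fixes nrm :: "'a::euclidean_space \<Rightarrow> real" and J R :: "('i \<times> 'a) set"
  assumes nrm: "is_norm nrm" and "finite J" and unit: "\<forall>j\<in>J. nrm (snd j) \<le> 1"
    and z: "\<forall>j\<in>J. 0 \<le> z j \<and> z j \<le> 1" and y: "\<forall>j\<in>J. y j \<in> {0, 1}" and "refines J y z"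
    and "R \<subseteq> J" and R_blocks: "\<And>j j'. j \<in> J \<Longrightarrow> j' \<in> R \<Longrightarrow> fst j = fst j' \<Longrightarrow> j \<in> R"
    and few: "card (fractional z R) \<le> card (fst ` fractional z R) + DIM('a)"
  shows "nrm (\<Sum>j\<in>R. (y j - z j) *\<^sub>R snd j) \<le> 2 * real DIM('a)"
proof -
  define F where "F = fractional z R"
  have "finite R"
    using \<open>finite J\<close> \<open>R \<subseteq> J\<close> by (rule rev_finite_subset)
  have FJ: "F \<subseteq> J" and "finite F"
    using \<open>finite R\<close> \<open>R \<subseteq> J\<close> unfolding F_def fractional_def by auto
  have "(\<Sum>j\<in>R. (y j - z j) *\<^sub>R snd j) = (\<Sum>j\<in>F. (y j - z j) *\<^sub>R snd j)"
    using \<open>finite R\<close> refines_eq_off_fractional[OF \<open>refines J y z\<close> \<open>R \<subseteq> J\<close> z]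
    unfolding F_def by (intro sum.mono_neutral_right) (auto simp: fractional_def)
  then have "nrm (\<Sum>j\<in>R. (y j - z j) *\<^sub>R snd j) \<le> (\<Sum>j\<in>F. nrm ((y j - z j) *\<^sub>R snd j))"
    using is_norm_sum_le[OF nrm] by simp
  also have "\<dots> \<le> (\<Sum>j\<in>F. \<bar>y j - z j\<bar>)"
  proof (intro sum_mono)
    fix j assume "j \<in> F"
    then have "nrm (snd j) \<le> 1"
      using unit FJ by blast
    then show "nrm ((y j - z j) *\<^sub>R snd j) \<le> \<bar>y j - z j\<bar>"
      by (simp add: is_norm_scaleR[OF nrm] mult_left_le)
  qed
  also have "\<dots> \<le> 2 * (real (card F) - real (card (fst ` F)))"
    using \<open>finite F\<close> y z FJ refines_fractional_block_sums[OF assms(2,6,7) z R_blocks]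
    unfolding F_def by (intro sum_abs_rounding_le) auto
  also have "\<dots> \<le> 2 * real DIM('a)"
    using few unfolding F_def by simp
  finally show ?thesis .
qed

text \<open>Rather than remembering the intermediate fractional vectors, z records that every 0/1 rounding
  consistent with z keeps the prefix up to block m within 2 DIM('a) of x.\<close>
definition safe_prefix ::
    "('a::euclidean_space \<Rightarrow> real) \<Rightarrow> (nat \<times> 'a) set \<Rightarrow> (nat \<times> 'a \<Rightarrow> real) \<Rightarrow> nat \<Rightarrow> (nat \<times> 'a \<Rightarrow> real) \<Rightarrow> bool"
  where
  "safe_prefix nrm J x m z \<longleftrightarrow> (\<forall>y. (\<forall>j\<in>J. y j \<in> {0, 1}) \<longrightarrow> refines J y z \<longrightarrow>
     nrm (\<Sum>j\<in>{j\<in>J. fst j \<le> m}. (y j - x j) *\<^sub>R snd j) \<le> 2 * real DIM('a))"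

lemma safe_prefix_refines:
  "safe_prefix nrm J x m z \<Longrightarrow> refines J z' z \<Longrightarrow> safe_prefix nrm J x m z'"
  unfolding safe_prefix_def by (meson refines_trans)

lemma safe_prefixI:
  fixes nrm :: "'a::euclidean_space \<Rightarrow> real"
  assumes "is_norm nrm" "finite J" "\<forall>j\<in>J. nrm (snd j) \<le> 1" "\<forall>j\<in>J. 0 \<le> z j \<and> z j \<le> 1"
    and "card (fractional z {j\<in>J. fst j \<le> m}) \<le> card (fst ` fractional z {j\<in>J. fst j \<le> m}) + DIM('a)"
    and balanced: "(\<Sum>j\<in>{j\<in>J. fst j \<le> m}. (z j - x j) *\<^sub>R snd j) = 0"
  shows "safe_prefix nrm J x m z"
  unfolding safe_prefix_def
proof (intro allI impI)
  fix y assume "\<forall>j\<in>J. y j \<in> {0, 1}" "refines J y z"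
  have "(\<Sum>j\<in>{j\<in>J. fst j \<le> m}. (y j - x j) *\<^sub>R snd j)
      = (\<Sum>j\<in>{j\<in>J. fst j \<le> m}. (y j - z j) *\<^sub>R snd j) + (\<Sum>j\<in>{j\<in>J. fst j \<le> m}. (z j - x j) *\<^sub>R snd j)"
    by (simp add: sum.distrib[symmetric] scaleR_add_left[symmetric])
  then show "nrm (\<Sum>j\<in>{j\<in>J. fst j \<le> m}. (y j - x j) *\<^sub>R snd j) \<le> 2 * real DIM('a)"
    using rounding_error_le[OF assms(1-4) \<open>\<forall>j\<in>J. y j \<in> {0, 1}\<close> \<open>refines J y z\<close>, of "{j\<in>J. fst j \<le> m}"]
      assms(5) balanced by auto
qed

definition rounding_stage ::
    "('a::euclidean_space \<Rightarrow> real) \<Rightarrow> (nat \<times> 'a) set \<Rightarrow> (nat \<times> 'a \<Rightarrow> real) \<Rightarrow> nat \<Rightarrow> (nat \<times> 'a \<Rightarrow> real) \<Rightarrow> bool"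
  where
  "rounding_stage nrm J x k z \<longleftrightarrow> (\<forall>j\<in>J. 0 \<le> z j \<and> z j \<le> 1) \<and> refines J z x
     \<and> (\<forall>j\<in>J. k < fst j \<longrightarrow> z j = x j) \<and> (\<Sum>j\<in>{j\<in>J. fst j \<le> k}. (z j - x j) *\<^sub>R snd j) = 0
     \<and> (\<forall>m\<in>{1..k}. safe_prefix nrm J x m z)"

lemma rounding_stage_Suc:
  fixes nrm :: "'a::euclidean_space \<Rightarrow> real" and J :: "(nat \<times> 'a) set"
  assumes nrm: "is_norm nrm" and finJ: "finite J" and unit: "\<forall>j\<in>J. nrm (snd j) \<le> 1"
    and "rounding_stage nrm J x k z"
  shows "\<exists>z'. rounding_stage nrm J x (Suc k) z'"
proof -
  from assms(4) have z_box: "\<forall>j\<in>J. 0 \<le> z j \<and> z j \<le> 1" and "refines J z x"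
    and z_later: "\<forall>j\<in>J. k < fst j \<longrightarrow> z j = x j"
    and z_balanced: "(\<Sum>j\<in>{j\<in>J. fst j \<le> k}. (z j - x j) *\<^sub>R snd j) = 0"
    and z_safe: "\<forall>m\<in>{1..k}. safe_prefix nrm J x m z"
    unfolding rounding_stage_def by blast+
  define R where "R = {j\<in>J. fst j \<le> Suc k}"
  have "R \<subseteq> J" "finite R"
    using finJ unfolding R_def by auto
  obtain z' where z'_box: "\<forall>j\<in>J. 0 \<le> z' j \<and> z' j \<le> 1" and "refines J z' z"
    and z'_unchanged: "\<And>j. j \<notin> fractional z R \<Longrightarrow> z' j = z j"
    and z'_vector: "(\<Sum>j\<in>R. z' j *\<^sub>R snd j) = (\<Sum>j\<in>R. z j *\<^sub>R snd j)"
    and z'_few: "card (fractional z' R) \<le> card (fst ` fractional z' R) + DIM('a)"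
    using reduce_fractional_support[OF finJ \<open>R \<subseteq> J\<close> z_box] by blast
  have "refines J z' x"
    using \<open>refines J z' z\<close> \<open>refines J z x\<close> by (rule refines_trans)
  moreover have "\<forall>j\<in>J. Suc k < fst j \<longrightarrow> z' j = x j"
    using z_later z'_unchanged unfolding R_def fractional_def by auto
  moreover have z'_balanced: "(\<Sum>j\<in>R. (z' j - x j) *\<^sub>R snd j) = 0"
  proof -
    have "(\<Sum>j\<in>R. (z' j - x j) *\<^sub>R snd j) = (\<Sum>j\<in>R. (z j - x j) *\<^sub>R snd j)"
      using z'_vector by (simp add: scaleR_diff_left sum_subtractf)
    also have "\<dots> = (\<Sum>j\<in>{j\<in>J. fst j \<le> k}. (z j - x j) *\<^sub>R snd j)"
      using \<open>finite R\<close> z_later unfolding R_def by (intro sum.mono_neutral_right) auto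
    finally show ?thesis
      using z_balanced by simp
  qed
  moreover have "safe_prefix nrm J x m z'" if "m \<in> {1..Suc k}" for m
  proof (cases "m = Suc k")
    case True
    then show ?thesis
      using safe_prefixI[OF nrm finJ unit z'_box] z'_few z'_balanced unfolding R_def by simp
  next
    case False
    then have "safe_prefix nrm J x m z"
      using that z_safe by auto
    then show ?thesis
      using \<open>refines J z' z\<close> by (rule safe_prefix_refines)
  qed
  ultimately show ?thesis
    using z'_box unfolding rounding_stage_def R_def by blast
qed

lemma exists_rounding_stage:
  fixes nrm :: "'a::euclidean_space \<Rightarrow> real" and J :: "(nat \<times> 'a) set"
  assumes "is_norm nrm" "finite J" "\<forall>j\<in>J. nrm (snd j) \<le> 1" and x: "\<forall>j\<in>J. 0 \<le> x j \<and> x j \<le> 1"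
  shows "\<exists>z. rounding_stage nrm J x k z"
proof (induction k)
  case 0
  have "rounding_stage nrm J x 0 x"
    using x refines_refl unfolding rounding_stage_def by auto
  then show ?case
    by blast
next
  case (Suc k)
  then show ?case
    using rounding_stage_Suc[OF assms(1-3)] by blast
qed

lemma exists_rounding_subset:
  fixes z :: "'b \<Rightarrow> real"
  assumes "finite W" and z: "\<forall>v\<in>W. 0 \<le> z v \<and> z v \<le> 1" and sum_z: "sum z W = real k"
  shows "\<exists>A\<subseteq>W. card A = k \<and> (\<forall>v\<in>W. z v \<in> {0, 1} \<longrightarrow> (if v \<in> A then 1 else 0) = z v)"
proof -
  define Ones where "Ones = {v\<in>W. z v = 1}"
  define Frac where "Frac = {v\<in>W. 0 < z v \<and> z v < 1}"
  have "sum z W = sum z Ones + sum z Frac"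
  proof -
    have "sum z W = sum z (Ones \<union> Frac)"
      using \<open>finite W\<close> z by (intro sum.mono_neutral_right) (auto simp: Ones_def Frac_def)
    also have "\<dots> = sum z Ones + sum z Frac"
      using \<open>finite W\<close> by (intro sum.union_disjoint) (auto simp: Ones_def Frac_def)
    finally show ?thesis .
  qed
  moreover have "sum z Ones = real (card Ones)"
    unfolding Ones_def by simp
  moreover have "0 \<le> sum z Frac" "sum z Frac \<le> real (card Frac)"
    using sum_mono[of Frac z "\<lambda>_. 1"] unfolding Frac_def by (auto intro: sum_nonneg)
  ultimately have "card Ones \<le> k" "k - card Ones \<le> card Frac"
    using sum_z by linarith+
  moreover have "finite Frac"
    using \<open>finite W\<close> unfolding Frac_def by simp
  ultimately obtain C where "C \<subseteq> Frac" "card C = k - card Ones"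
    by (meson obtain_subset_with_card_n)
  moreover have "finite Ones" "Ones \<inter> C = {}"
    using \<open>finite W\<close> \<open>C \<subseteq> Frac\<close> unfolding Ones_def Frac_def by auto
  ultimately show ?thesis
    using \<open>card Ones \<le> k\<close> \<open>finite Frac\<close>
    by (intro exI[of _ "Ones \<union> C"]) (auto simp: card_Un_disjoint finite_subset Ones_def Frac_def)
qed

lemma sum_Sigma_block:
  "i \<in> I \<Longrightarrow> sum f {j\<in>Sigma I W. fst j = i} = (\<Sum>v\<in>W i. f (i, v))"
proof -
  assume "i \<in> I"
  then have "{j\<in>Sigma I W. fst j = i} = Pair i ` W i"
    by auto
  then show ?thesis
    by (simp add: sum.reindex inj_on_def)
qed

lemma exists_integral_refinement:
  fixes z :: "'i \<times> 'b \<Rightarrow> real" and k :: "'i \<Rightarrow> nat"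
  assumes finW: "\<And>i. i \<in> I \<Longrightarrow> finite (W i)" and z_box: "\<forall>j\<in>Sigma I W. 0 \<le> z j \<and> z j \<le> 1"
    and z_block: "\<And>i. i \<in> I \<Longrightarrow> (\<Sum>v\<in>W i. z (i, v)) = real (k i)"
  shows "\<exists>A. (\<forall>i\<in>I. A i \<subseteq> W i \<and> card (A i) = k i)
    \<and> refines (Sigma I W) (\<lambda>j. if snd j \<in> A (fst j) then 1 else 0) z"
proof -
  have "\<forall>i\<in>I. \<exists>A\<subseteq>W i. card A = k i \<and> (\<forall>v\<in>W i. z (i, v) \<in> {0, 1} \<longrightarrow> (if v \<in> A then 1 else 0) = z (i, v))"
    using z_box by (intro ballI exists_rounding_subset[OF finW _ z_block]) auto
  then obtain A where A: "\<forall>i\<in>I. A i \<subseteq> W i \<and> card (A i) = k i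
      \<and> (\<forall>v\<in>W i. z (i, v) \<in> {0, 1} \<longrightarrow> (if v \<in> A i then 1 else 0) = z (i, v))"
    by (rule bchoice[THEN exE]) blast
  have "(\<Sum>j\<in>{j\<in>Sigma I W. fst j = i}. if snd j \<in> A (fst j) then 1 else 0) = sum z {j\<in>Sigma I W. fst j = i}" for i
  proof (cases "i \<in> I")
    case True
    then show ?thesis
      using A finW[OF True] z_block[OF True]
      unfolding sum_Sigma_block[OF True] by (simp add: sum.If_cases Int_absorb1)
  next
    case False
    then have "{j\<in>Sigma I W. fst j = i} = {}"
      by auto
    then show ?thesis
      by (metis sum.empty)
  qed
  then show ?thesis
    using A unfolding refines_def by (intro exI[of _ A]) auto
qed

lemma sum_Sigma_rounding_deviation:
  fixes W :: "'i \<Rightarrow> 'a::real_vector set"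
  assumes "finite I" "\<And>i. i \<in> I \<Longrightarrow> finite (W i)" "\<And>i. i \<in> I \<Longrightarrow> A i \<subseteq> W i"
  shows "(\<Sum>j\<in>Sigma I W. ((if snd j \<in> A (fst j) then 1 else 0) - c (fst j)) *\<^sub>R snd j)
    = (\<Sum>i\<in>I. (\<Sum>v\<in>A i. v) - c i *\<^sub>R (\<Sum>v\<in>W i. v))"
proof -
  have "(\<Sum>j\<in>Sigma I W. ((if snd j \<in> A (fst j) then 1 else 0) - c (fst j)) *\<^sub>R snd j)
      = (\<Sum>i\<in>I. (\<Sum>v\<in>W i. if v \<in> A i then v else 0) - (\<Sum>v\<in>W i. c i *\<^sub>R v))"
    using assms(1,2) by (simp add: sum.Sigma case_prod_beta scaleR_diff_left sum_subtractf
        if_distrib[of "\<lambda>c. c *\<^sub>R _"] cong: if_cong)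
  also have "\<dots> = (\<Sum>i\<in>I. (\<Sum>v\<in>A i. v) - c i *\<^sub>R (\<Sum>v\<in>W i. v))"
    using assms(2,3) by (intro sum.cong) (auto simp: sum.If_cases Int_absorb1 scaleR_sum_right)
  finally show ?thesis .
qed

lemma exists_balanced_subsets:
  fixes nrm :: "'a::euclidean_space \<Rightarrow> real" and W :: "nat \<Rightarrow> 'a set" and k :: "nat \<Rightarrow> nat"
  assumes nrm: "is_norm nrm" and finW: "\<And>i. i \<in> {1..N} \<Longrightarrow> finite (W i)"
    and unitW: "\<And>i. i \<in> {1..N} \<Longrightarrow> W i \<subseteq> {v. nrm v \<le> 1}"
    and k: "\<And>i. i \<in> {1..N} \<Longrightarrow> k i \<le> card (W i)"
  shows "\<exists>A. (\<forall>i\<in>{1..N}. A i \<subseteq> W i \<and> card (A i) = k i) \<and>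
    (\<forall>n\<in>{1..N}. nrm (\<Sum>i\<in>{1..n}. (\<Sum>v\<in>A i. v) - (real (k i) / real (card (W i))) *\<^sub>R (\<Sum>v\<in>W i. v))
       \<le> 2 * real DIM('a))"
proof -
  define J where "J = Sigma {1..N} W"
  define x where "x j = real (k (fst j)) / real (card (W (fst j)))" for j :: "nat \<times> 'a"
  have finJ: "finite J"
    unfolding J_def using finW by auto
  have unitJ: "\<forall>j\<in>J. nrm (snd j) \<le> 1"
    unfolding J_def using unitW by fastforce
  have x_box: "\<forall>j\<in>J. 0 \<le> x j \<and> x j \<le> 1"
    using k unfolding J_def x_def by (force simp: divide_le_eq_1)
  obtain z where z_box: "\<forall>j\<in>J. 0 \<le> z j \<and> z j \<le> 1" and "refines J z x"
    and z_safe: "\<forall>m\<in>{1..N}. safe_prefix nrm J x m z"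
    using exists_rounding_stage[OF nrm finJ unitJ x_box, of N] unfolding rounding_stage_def by blast
  have z_block: "(\<Sum>v\<in>W i. z (i, v)) = real (k i)" if "i \<in> {1..N}" for i
  proof -
    have "(\<Sum>v\<in>W i. z (i, v)) = sum z {j\<in>J. fst j = i}"
      unfolding J_def sum_Sigma_block[OF that] ..
    also have "\<dots> = sum x {j\<in>J. fst j = i}"
      using \<open>refines J z x\<close> unfolding refines_def by blast
    also have "\<dots> = real (k i)"
      using k[OF that] unfolding J_def sum_Sigma_block[OF that] x_def by (cases "card (W i) = 0") auto
    finally show ?thesis .
  qed
  obtain A where A: "\<forall>i\<in>{1..N}. A i \<subseteq> W i \<and> card (A i) = k i"
    and "refines J (\<lambda>j. if snd j \<in> A (fst j) then 1 else 0) z"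
    using exists_integral_refinement[of "{1..N}" W z k] finW z_box z_block unfolding J_def
    by blast
  have "nrm (\<Sum>i\<in>{1..n}. (\<Sum>v\<in>A i. v) - (real (k i) / real (card (W i))) *\<^sub>R (\<Sum>v\<in>W i. v))
      \<le> 2 * real DIM('a)" if n: "n \<in> {1..N}" for n
  proof -
    have prefix: "{j\<in>J. fst j \<le> n} = Sigma {1..n} W"
      unfolding J_def using n by auto
    have "(\<Sum>i\<in>{1..n}. (\<Sum>v\<in>A i. v) - (real (k i) / real (card (W i))) *\<^sub>R (\<Sum>v\<in>W i. v))
        = (\<Sum>j\<in>{j\<in>J. fst j \<le> n}. ((if snd j \<in> A (fst j) then 1 else 0) - x j) *\<^sub>R snd j)"
      unfolding prefix x_def using finW A n by (intro sum_Sigma_rounding_deviation[symmetric]) auto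
    then show ?thesis
      using z_safe n \<open>refines J _ z\<close> unfolding safe_prefix_def by simp
  qed
  then show ?thesis
    using A by blast
qed

lemma r_selection_mono:
  "r_selection N r T chi \<Longrightarrow> (\<And>i. i \<in> {1..N} \<Longrightarrow> T i \<subseteq> V i) \<Longrightarrow> r_selection N r V chi"
  unfolding r_selection_def by blast

lemma r_selection_append:
  assumes A: "r_selection N a A chA" and B: "r_selection N b B chB"
    and disjoint: "\<And>i. i \<in> {1..N} \<Longrightarrow> A i \<inter> B i = {}"
  shows "r_selection N (a + b) (\<lambda>i. A i \<union> B i) (\<lambda>i l. if l \<le> a then chA i l else chB i (l - a))"
  unfolding r_selection_def
proof (intro ballI conjI)
  fix i assume i: "i \<in> {1..N}"
  let ?chi = "\<lambda>l. if l \<le> a then chA i l else chB i (l - a)"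
  have split: "{1..a + b} = {1..a} \<union> {a + 1..a + b}"
    by auto
  have low: "?chi ` {1..a} = chA i ` {1..a}"
    by (rule image_cong) auto
  have high_set: "{a + 1..a + b} = (+) a ` {1..b}"
    by (simp add: add.commute)
  have high: "?chi ` {a + 1..a + b} = chB i ` {1..b}"
    unfolding high_set image_image by (rule image_cong) auto
  have ranges: "chA i ` {1..a} \<subseteq> A i" "chB i ` {1..b} \<subseteq> B i"
    using A B i unfolding r_selection_def by blast+
  have diffs: "{1..a} - {a + 1..a + b} = {1..a}" "{a + 1..a + b} - {1..a} = {a + 1..a + b}"
    by auto
  have "inj_on ?chi {1..a}"
    using A i inj_on_cong[of "{1..a}" ?chi "chA i"] unfolding r_selection_def by simp
  moreover have "inj_on ?chi {a + 1..a + b}"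
  proof (rule inj_onI)
    fix l l' assume l: "l \<in> {a + 1..a + b}" "l' \<in> {a + 1..a + b}" and "?chi l = ?chi l'"
    then have "chB i (l - a) = chB i (l' - a)" "l - a \<in> {1..b}" "l' - a \<in> {1..b}"
      by auto
    then have "l - a = l' - a"
      using B i unfolding r_selection_def by (meson inj_onD)
    then show "l = l'"
      using l by auto
  qed
  moreover have "?chi ` ({1..a} - {a + 1..a + b}) \<inter> ?chi ` ({a + 1..a + b} - {1..a}) = {}"
    unfolding diffs low high using ranges disjoint[OF i] by blast
  ultimately show "inj_on ?chi {1..a + b}"
    unfolding split inj_on_Un by blast
  show "?chi ` {1..a + b} \<subseteq> A i \<union> B i"
    using ranges unfolding split image_Un low high by blast
qed

lemma selection_error_compose:
  fixes nrm :: "'a::real_vector \<Rightarrow> real"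
  assumes nrm: "is_norm nrm" and "t > 0"
    and inner: "nrm (\<Sum>i\<in>I. p i - (1 / t) *\<^sub>R S i) \<le> E1"
    and outer: "nrm (\<Sum>i\<in>I. S i - (t / u i) *\<^sub>R U i) \<le> E2"
  shows "nrm (\<Sum>i\<in>I. p i - (1 / u i) *\<^sub>R U i) \<le> E1 + E2 / t"
proof -
  let ?X = "\<Sum>i\<in>I. p i - (1 / t) *\<^sub>R S i" and ?Y = "\<Sum>i\<in>I. S i - (t / u i) *\<^sub>R U i"
  have "(\<Sum>i\<in>I. p i - (1 / u i) *\<^sub>R U i) = ?X + (1 / t) *\<^sub>R ?Y"
    using \<open>t > 0\<close> by (simp add: scaleR_sum_right scaleR_diff_right sum_subtractf)
  then have "nrm (\<Sum>i\<in>I. p i - (1 / u i) *\<^sub>R U i) \<le> nrm ?X + \<bar>1 / t\<bar> * nrm ?Y"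
    using is_norm_add_scaleR_le[OF nrm, of ?X "1 / t" ?Y] by simp
  also have "\<dots> \<le> E1 + E2 / t"
    using inner outer \<open>t > 0\<close> by (intro add_mono) (auto simp: divide_right_mono)
  finally show ?thesis .
qed

lemma complement_prefix_error:
  fixes nrm :: "'a::real_vector \<Rightarrow> real"
  assumes nrm: "is_norm nrm" and "s > 0"
    and T: "\<And>i. i \<in> I \<Longrightarrow> finite (T i) \<and> card (T i) = s \<and> A i \<subseteq> T i \<and> card (A i) = a"
  shows "nrm (\<Sum>i\<in>I. (\<Sum>v\<in>T i - A i. v) - (real (s - a) / real s) *\<^sub>R (\<Sum>v\<in>T i. v))
    = nrm (\<Sum>i\<in>I. (\<Sum>v\<in>A i. v) - (real a / real s) *\<^sub>R (\<Sum>v\<in>T i. v))"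
proof -
  have "(\<Sum>v\<in>T i - A i. v) - (real (s - a) / real s) *\<^sub>R (\<Sum>v\<in>T i. v)
      = - ((\<Sum>v\<in>A i. v) - (real a / real s) *\<^sub>R (\<Sum>v\<in>T i. v))" if "i \<in> I" for i
  proof -
    have "a \<le> s"
      using T[OF that] by (metis card_mono)
    then have "real (s - a) / real s = 1 - real a / real s"
      using \<open>s > 0\<close> by (simp add: of_nat_diff field_simps)
    moreover have "(\<Sum>v\<in>T i - A i. v) = (\<Sum>v\<in>T i. v) - (\<Sum>v\<in>A i. v)"
      using T[OF that] by (simp add: sum_diff finite_subset)
    ultimately show ?thesis
      by (simp add: scaleR_diff_left)
  qed
  then have "(\<Sum>i\<in>I. (\<Sum>v\<in>T i - A i. v) - (real (s - a) / real s) *\<^sub>R (\<Sum>v\<in>T i. v))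
      = - (\<Sum>i\<in>I. (\<Sum>v\<in>A i. v) - (real a / real s) *\<^sub>R (\<Sum>v\<in>T i. v))"
    unfolding sum_negf[symmetric] by (rule sum.cong[OF refl])
  then show ?thesis
    by (simp only: is_norm_minus[OF nrm])
qed

text \<open>The value at 2 is lowered from 5/4 to 1 so that halving_bound_step also holds for s = 3,
  c = 2. Note that halving_bound 1 = 0.\<close>
definition halving_bound :: "nat \<Rightarrow> real" where
  "halving_bound s = (if s = 2 then 1 else 5 / 2 - 5 / (2 * real s))"

lemma halving_bound_step:
  assumes "s \<ge> 2" and "c = s div 2 \<or> c = s - s div 2"
  shows "halving_bound c + 1 / real c \<le> halving_bound s"
proof -
  have "c \<ge> 1" "2 * c \<le> s + 1"
    using assms by auto
  then consider "c = 1" | "c = 2" "s \<ge> 3" | "c \<ge> 3" "s \<ge> 5"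
    using assms by linarith
  then show ?thesis
  proof cases
    case 1
    then show ?thesis
      using \<open>s \<ge> 2\<close> by (cases "s = 2") (auto simp: halving_bound_def field_simps)
  next
    case 2
    then show ?thesis
      by (auto simp: halving_bound_def field_simps)
  next
    case 3
    then show ?thesis
      using \<open>2 * c \<le> s + 1\<close> by (auto simp: halving_bound_def field_simps)
  qed
qed

lemma halving_bound_le: "r \<ge> 1 \<Longrightarrow> halving_bound r + 1 / real r \<le> 5 / 2"
  by (auto simp: halving_bound_def field_simps)

lemma halving_error_le:
  fixes nrm :: "'a::real_vector \<Rightarrow> real"
  assumes nrm: "is_norm nrm" and "2 \<le> s" and c: "c = s div 2 \<or> c = s - s div 2"
    and inner: "nrm (\<Sum>i\<in>I. p i - (1 / real c) *\<^sub>R S i) \<le> 2 * real d * halving_bound c"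
    and outer: "nrm (\<Sum>i\<in>I. S i - (real c / real s) *\<^sub>R U i) \<le> 2 * real d"
  shows "nrm (\<Sum>i\<in>I. p i - (1 / real s) *\<^sub>R U i) \<le> 2 * real d * halving_bound s"
proof -
  have "1 \<le> c"
    using assms(2,3) by auto
  then have "nrm (\<Sum>i\<in>I. p i - (1 / real s) *\<^sub>R U i) \<le> 2 * real d * halving_bound c + 2 * real d / real c"
    using selection_error_compose[OF nrm _ inner outer] by simp
  also have "\<dots> = 2 * real d * (halving_bound c + 1 / real c)"
    by (simp add: algebra_simps)
  also have "\<dots> \<le> 2 * real d * halving_bound s"
    using halving_bound_step[OF assms(2,3)] by (intro mult_left_mono) auto
  finally show ?thesis .
qed

definition balanced_selection ::
    "('a::real_vector \<Rightarrow> real) \<Rightarrow> nat \<Rightarrow> nat \<Rightarrow> (nat \<Rightarrow> 'a set) \<Rightarrow> real \<Rightarrow> (nat \<Rightarrow> nat \<Rightarrow> 'a) \<Rightarrow> bool"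
  where
  "balanced_selection nrm N s T E chi \<longleftrightarrow> r_selection N s T chi \<and>
     (\<forall>n\<in>{1..N}. \<forall>l\<in>{1..s}. nrm (\<Sum>i\<in>{1..n}. chi i l - (1 / real s) *\<^sub>R (\<Sum>v\<in>T i. v)) \<le> E)"

lemma balanced_selection_singletons:
  assumes "is_norm nrm" and "\<And>i. i \<in> {1..N} \<Longrightarrow> card (T i) = 1"
  shows "balanced_selection nrm N 1 T 0 (\<lambda>i l. the_elem (T i))"
proof -
  have T: "T i = {the_elem (T i)}" if "i \<in> {1..N}" for i
    using assms(2)[OF that] by (metis card_1_singletonE the_elem_eq)
  have "(\<Sum>i\<in>{1..n}. the_elem (T i) - (1 / real 1) *\<^sub>R (\<Sum>v\<in>T i. v)) = 0" if "n \<in> {1..N}" for n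
    using that by (intro sum.neutral ballI) (subst (2) T, auto)
  then show ?thesis
    using T is_norm_zero[OF assms(1)] unfolding balanced_selection_def r_selection_def by auto
qed

lemma balanced_selection_halving:
  fixes nrm :: "'a::real_vector \<Rightarrow> real"
  assumes nrm: "is_norm nrm" and "2 \<le> s" and a: "a = s div 2"
    and T: "\<And>i. i \<in> {1..N} \<Longrightarrow> finite (T i) \<and> card (T i) = s \<and> A i \<subseteq> T i \<and> card (A i) = a"
    and A_error: "\<And>n. n \<in> {1..N} \<Longrightarrow>
      nrm (\<Sum>i\<in>{1..n}. (\<Sum>v\<in>A i. v) - (real a / real s) *\<^sub>R (\<Sum>v\<in>T i. v)) \<le> 2 * real d"
    and chA: "balanced_selection nrm N a A (2 * real d * halving_bound a) chA"
    and chB: "balanced_selection nrm N (s - a) (\<lambda>i. T i - A i) (2 * real d * halving_bound (s - a)) chB"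
  shows "balanced_selection nrm N s T (2 * real d * halving_bound s)
    (\<lambda>i l. if l \<le> a then chA i l else chB i (l - a))"
  unfolding balanced_selection_def
proof (intro conjI ballI)
  have "a + (s - a) = s"
    using a by simp
  then have "r_selection N s (\<lambda>i. A i \<union> (T i - A i)) (\<lambda>i l. if l \<le> a then chA i l else chB i (l - a))"
    using r_selection_append[of N a A chA "s - a" "\<lambda>i. T i - A i" chB] chA chB
    unfolding balanced_selection_def by auto
  then show "r_selection N s T (\<lambda>i l. if l \<le> a then chA i l else chB i (l - a))"
    by (rule r_selection_mono) (use T in blast)
  fix n l assume n: "n \<in> {1..N}" and l: "l \<in> {1..s}"
  have T': "\<And>i. i \<in> {1..n} \<Longrightarrow> finite (T i) \<and> card (T i) = s \<and> A i \<subseteq> T i \<and> card (A i) = a"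
    using T n by auto
  show "nrm (\<Sum>i\<in>{1..n}. (if l \<le> a then chA i l else chB i (l - a)) - (1 / real s) *\<^sub>R (\<Sum>v\<in>T i. v))
      \<le> 2 * real d * halving_bound s"
  proof (cases "l \<le> a")
    case True
    then have "nrm (\<Sum>i\<in>{1..n}. chA i l - (1 / real a) *\<^sub>R (\<Sum>v\<in>A i. v)) \<le> 2 * real d * halving_bound a"
      using chA n l unfolding balanced_selection_def by auto
    then show ?thesis
      using halving_error_le[OF nrm \<open>2 \<le> s\<close> _ _ A_error[OF n]] a True by simp
  next
    case False
    have "nrm (\<Sum>i\<in>{1..n}. (\<Sum>v\<in>T i - A i. v) - (real (s - a) / real s) *\<^sub>R (\<Sum>v\<in>T i. v))
        = nrm (\<Sum>i\<in>{1..n}. (\<Sum>v\<in>A i. v) - (real a / real s) *\<^sub>R (\<Sum>v\<in>T i. v))"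
      by (rule complement_prefix_error[OF nrm]) (use T' \<open>2 \<le> s\<close> in auto)
    then have B_error: "nrm (\<Sum>i\<in>{1..n}. (\<Sum>v\<in>T i - A i. v) - (real (s - a) / real s) *\<^sub>R (\<Sum>v\<in>T i. v))
        \<le> 2 * real d"
      using A_error[OF n] by simp
    have "l - a \<in> {1..s - a}"
      using l False by auto
    then have "nrm (\<Sum>i\<in>{1..n}. chB i (l - a) - (1 / real (s - a)) *\<^sub>R (\<Sum>v\<in>T i - A i. v))
        \<le> 2 * real d * halving_bound (s - a)"
      using chB n unfolding balanced_selection_def by blast
    then show ?thesis
      using halving_error_le[OF nrm \<open>2 \<le> s\<close> _ _ B_error] a False by simp
  qed
qed

lemma exists_balanced_selection:
  fixes nrm :: "'a::euclidean_space \<Rightarrow> real" and T :: "nat \<Rightarrow> 'a set"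
  assumes nrm: "is_norm nrm" and "s \<ge> 1"
    and "\<And>i. i \<in> {1..N} \<Longrightarrow> finite (T i) \<and> card (T i) = s \<and> T i \<subseteq> {v. nrm v \<le> 1}"
  shows "\<exists>chi. balanced_selection nrm N s T (2 * real DIM('a) * halving_bound s) chi"
  using assms(2,3)
proof (induction s arbitrary: T rule: less_induct)
  case (less s)
  show ?case
  proof (cases "s = 1")
    case True
    then show ?thesis
      using balanced_selection_singletons[OF nrm, of N T] less.prems(2) by (auto simp: halving_bound_def)
  next
    case False
    define a where "a = s div 2"
    have "2 \<le> s" "1 \<le> a" "a < s" "1 \<le> s - a" "s - a < s"
      using False less.prems(1) unfolding a_def by auto
    obtain A where A: "\<forall>i\<in>{1..N}. A i \<subseteq> T i \<and> card (A i) = a" and A_error: "\<forall>n\<in>{1..N}.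
        nrm (\<Sum>i\<in>{1..n}. (\<Sum>v\<in>A i. v) - (real a / real (card (T i))) *\<^sub>R (\<Sum>v\<in>T i. v)) \<le> 2 * real DIM('a)"
      using exists_balanced_subsets[OF nrm, of N T "\<lambda>_. a"] less.prems(2) \<open>a < s\<close> by force
    have A_error': "nrm (\<Sum>i\<in>{1..n}. (\<Sum>v\<in>A i. v) - (real a / real s) *\<^sub>R (\<Sum>v\<in>T i. v))
        \<le> 2 * real DIM('a)" if "n \<in> {1..N}" for n
    proof -
      have "(\<Sum>i\<in>{1..n}. (\<Sum>v\<in>A i. v) - (real a / real (card (T i))) *\<^sub>R (\<Sum>v\<in>T i. v))
          = (\<Sum>i\<in>{1..n}. (\<Sum>v\<in>A i. v) - (real a / real s) *\<^sub>R (\<Sum>v\<in>T i. v))"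
        using less.prems(2) that by (intro sum.cong) auto
      then show ?thesis
        using A_error[rule_format, OF that] by simp
    qed
    have T: "finite (T i) \<and> card (T i) = s \<and> A i \<subseteq> T i \<and> card (A i) = a" if "i \<in> {1..N}" for i
      using less.prems(2) A that by blast
    have "finite (A i) \<and> card (A i) = a \<and> A i \<subseteq> {v. nrm v \<le> 1}"
      "finite (T i - A i) \<and> card (T i - A i) = s - a \<and> T i - A i \<subseteq> {v. nrm v \<le> 1}"
      if "i \<in> {1..N}" for i
      using T[OF that] less.prems(2)[OF that] by (auto simp: card_Diff_subset finite_subset)
    then obtain chA chB where "balanced_selection nrm N a A (2 * real DIM('a) * halving_bound a) chA"
      and "balanced_selection nrm N (s - a) (\<lambda>i. T i - A i) (2 * real DIM('a) * halving_bound (s - a)) chB"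
      using less.IH[OF \<open>a < s\<close> \<open>1 \<le> a\<close>, of A] less.IH[OF \<open>s - a < s\<close> \<open>1 \<le> s - a\<close>, of "\<lambda>i. T i - A i"]
      by blast
    then show ?thesis
      using balanced_selection_halving[OF nrm \<open>2 \<le> s\<close> a_def T A_error'] by blast
  qed
qed

theorem theorem4:
  fixes nrm :: "real ^ 'd \<Rightarrow> real"
    and V :: "nat \<Rightarrow> (real ^ 'd) set"
    and N r :: nat
  assumes "is_norm nrm"
    and "N \<ge> 1" and "r \<ge> 1"
    and "\<And>i. i \<in> {1..N} \<Longrightarrow> finite (V i)"
    and "\<And>i. i \<in> {1..N} \<Longrightarrow> V i \<subseteq> {v. nrm v \<le> 1}"
    and "\<And>i. i \<in> {1..N} \<Longrightarrow> card (V i) \<ge> r"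
  shows "\<exists>chi. r_selection N r V chi \<and>
           (\<forall>n\<in>{1..N}. \<forall>l\<in>{1..r}.
              nrm (\<Sum>i\<in>{1..n}. chi i l - (1 / real (card (V i))) *\<^sub>R (\<Sum>v\<in>V i. v))
                \<le> 5 * real CARD('d))"
proof -
  obtain T where T: "\<forall>i\<in>{1..N}. T i \<subseteq> V i \<and> card (T i) = r"
    and T_error: "\<forall>n\<in>{1..N}. nrm (\<Sum>i\<in>{1..n}. (\<Sum>v\<in>T i. v) - (real r / real (card (V i))) *\<^sub>R (\<Sum>v\<in>V i. v))
      \<le> 2 * real DIM(real ^ 'd)"
    using exists_balanced_subsets[OF assms(1), of N V "\<lambda>_. r"] assms(4-6) by blast
  obtain chi where chi: "balanced_selection nrm N r T (2 * real DIM(real ^ 'd) * halving_bound r) chi"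
    using exists_balanced_selection[OF assms(1,3), of N T] T assms(4,5) by (meson finite_subset subset_trans)
  have "nrm (\<Sum>i\<in>{1..n}. chi i l - (1 / real (card (V i))) *\<^sub>R (\<Sum>v\<in>V i. v)) \<le> 5 * real CARD('d)"
    if "n \<in> {1..N}" "l \<in> {1..r}" for n l
  proof -
    have "nrm (\<Sum>i\<in>{1..n}. chi i l - (1 / real (card (V i))) *\<^sub>R (\<Sum>v\<in>V i. v))
        \<le> 2 * real DIM(real ^ 'd) * (halving_bound r + 1 / real r)"
      using selection_error_compose[OF assms(1) _ _ T_error[rule_format, OF that(1)]] chi that assms(3)
      unfolding balanced_selection_def by (simp add: algebra_simps)
    also have "\<dots> \<le> 5 * real CARD('d)"
      using halving_bound_le[OF assms(3)] by simp
    finally show ?thesis .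
  qed
  moreover have "r_selection N r V chi"
    using chi T unfolding balanced_selection_def by (blast intro: r_selection_mono)
  ultimately show ?thesis
    by blast
qed

end
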